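(* Let $\Omega$ be a finite-dimensional real Euclidean space, let $N \geq 1$, and let $f_1,\dots,f_N \colon \Omega \to \mathbb{R}$ be continuous convex functions, each of which is $\mu$-strongly convex for some $\mu > 0$. Let $\nu \in (0,\mu]$, fix an index $j \in \{1,\dots,N\}$ and a vector $\zeta_j \in \Omega$. Define $g_j(\theta) = f_j(\theta) - \frac{\nu}{2}\|\theta\|^2$ and \[ E^{j}(\theta) = f_j(\theta) - \nu \langle \zeta_j, \theta\rangle, \qquad E^{j}_{\mathrm{d}}(\xi) = g_j^*(\xi) + \frac{1}{2\nu}\|\xi - \nu \zeta_j\|^2 \qquad (\theta,\xi \in \Omega). \] If $\theta_j \in \Omega$ minimizes $E^{j}$ over $\Omega$, then $\xi_j = \nu(\zeta_j - \theta_j)$ minimizes $E^{j}_{\mathrm{d}}$ over $\Omega$, and moreover \[ E^{j}(\theta_j) + E^{j}_{\mathrm{d}}(\xi_j) = 0. \]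
   Context: For a function $h \colon \Omega \to \mathbb{R}\cup\{+\infty\}$, $h^*(p) = \sup_{x\in\Omega}\{\langle p, x\rangle - h(x)\}$ denotes its Legendre--Fenchel conjugate. A function $h$ is $\mu$-strongly convex if $h - \frac{\mu}{2}\|\cdot\|^2$ is convex. In the paper $\zeta_j$ is the local control variate $\zeta_j^{(n)}$ of client $j$ at round $n$ of the algorithm DualFL; the statement holds for that vector, whatever it is. *)

theory Defs
  imports "HOL-Analysis.Analysis"
begin

definition fenchel_conj :: "('a::real_inner \<Rightarrow> real) \<Rightarrow> 'a \<Rightarrow> ereal" where
  "fenchel_conj h p = (SUP x\<in>UNIV. ereal (inner p x - h x))"

definition strongly_convex_on :: "real \<Rightarrow> ('a::real_inner) set \<Rightarrow> ('a \<Rightarrow> real) \<Rightarrow> bool" where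
  "strongly_convex_on \<mu> S h \<longleftrightarrow> convex_on S (\<lambda>x. h x - \<mu> / 2 * (norm x)\<^sup>2)"

end

theory Submission
  imports Defs
begin

text \<open>The function \<open>g = f\<^sub>j - \<nu>/2 \<parallel>\<cdot>\<parallel>\<^sup>2\<close> is convex because \<open>\<nu> \<le> \<mu>\<close>, and the minimality of \<open>\<theta>\<^sub>j\<close>
  says that \<open>\<theta>\<^sub>j\<close> minimises \<open>g + \<nu>/2 \<parallel>\<cdot> - \<zeta>\<^sub>j\<parallel>\<^sup>2\<close>. The first-order optimality condition of this
  proximal problem makes \<open>\<xi>\<^sub>j = \<nu>(\<zeta>\<^sub>j - \<theta>\<^sub>j)\<close> a subgradient of \<open>g\<close> at \<open>\<theta>\<^sub>j\<close>, so the Fenchel--Young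
  inequality is an equality at \<open>(\<theta>\<^sub>j, \<xi>\<^sub>j)\<close>; both claims then follow by completing a square.\<close>

lemma power2_norm_add_scaleR:
  fixes x d :: "'a::real_inner"
  shows "(norm (x + t *\<^sub>R d))\<^sup>2 = (norm x)\<^sup>2 + 2 * t * inner x d + t\<^sup>2 * (norm d)\<^sup>2"
  unfolding power2_norm_eq_inner
  by (simp add: inner_simps algebra_simps inner_commute power2_eq_square)

lemma convex_on_power2_norm:
  assumes "convex S"
  shows "convex_on S (\<lambda>x::'a::real_inner. (norm x)\<^sup>2)"
proof (rule convex_onI[OF _ assms])
  fix t :: real and x y :: 'a
  assume "0 < t" "t < 1"
  have "(norm ((1 - t) *\<^sub>R x + t *\<^sub>R y))\<^sup>2
      = (1 - t) * (norm x)\<^sup>2 + t * (norm y)\<^sup>2 - t * (1 - t) * (norm (x - y))\<^sup>2"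
    unfolding power2_norm_eq_inner by (simp add: inner_simps algebra_simps inner_commute)
  moreover have "0 \<le> t * (1 - t) * (norm (x - y))\<^sup>2"
    using \<open>0 < t\<close> \<open>t < 1\<close> by simp
  ultimately show "(norm ((1 - t) *\<^sub>R x + t *\<^sub>R y))\<^sup>2 \<le> (1 - t) * (norm x)\<^sup>2 + t * (norm y)\<^sup>2"
    by linarith
qed

lemma strongly_convex_on_mono:
  assumes "strongly_convex_on \<mu> S h" and "\<nu> \<le> \<mu>"
  shows "strongly_convex_on \<nu> S h"
proof -
  have "convex_on S (\<lambda>x. (h x - \<mu> / 2 * (norm x)\<^sup>2) + (\<mu> - \<nu>) / 2 * (norm x)\<^sup>2)"
    using assms convex_on_power2_norm[OF convex_on_imp_convex]
    by (intro convex_on_add convex_on_cmul) (auto simp: strongly_convex_on_def)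
  moreover have "(\<lambda>x. (h x - \<mu> / 2 * (norm x)\<^sup>2) + (\<mu> - \<nu>) / 2 * (norm x)\<^sup>2)
      = (\<lambda>x. h x - \<nu> / 2 * (norm x)\<^sup>2)"
    by (simp add: fun_eq_iff field_simps)
  ultimately show ?thesis
    by (simp add: strongly_convex_on_def)
qed

text \<open>Compare \<open>x\<^sub>0\<close> with \<open>x\<^sub>0 + t(x - x\<^sub>0)\<close>, use convexity of \<open>g\<close> on the segment, divide by \<open>t\<close>
  and let \<open>t \<rightarrow> 0\<^sup>+\<close>.\<close>

lemma convex_on_prox_subgradient:
  fixes g :: "'a::real_inner \<Rightarrow> real"
  assumes "convex_on UNIV g"
    and prox: "\<And>x. g x\<^sub>0 + \<nu> / 2 * (norm (x\<^sub>0 - c))\<^sup>2 \<le> g x + \<nu> / 2 * (norm (x - c))\<^sup>2"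
  shows "g x\<^sub>0 + inner (\<nu> *\<^sub>R (c - x\<^sub>0)) (x - x\<^sub>0) \<le> g x"
proof -
  define d where "d = x - x\<^sub>0"
  define lower where "lower t = g x\<^sub>0 + \<nu> * inner (c - x\<^sub>0) d - t * (\<nu> / 2 * (norm d)\<^sup>2)" for t
  have "lower t \<le> g x" if "0 < t" "t < 1" for t
  proof -
    have "g (x\<^sub>0 + t *\<^sub>R d) \<le> (1 - t) * g x\<^sub>0 + t * g x"
      using convex_onD[OF assms(1), of t x\<^sub>0 x] that
      by (simp add: d_def algebra_simps)
    moreover have "g x\<^sub>0 + \<nu> / 2 * (norm (x\<^sub>0 - c))\<^sup>2
        \<le> g (x\<^sub>0 + t *\<^sub>R d) + \<nu> / 2 * (norm ((x\<^sub>0 - c) + t *\<^sub>R d))\<^sup>2"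
      using prox[of "x\<^sub>0 + t *\<^sub>R d"] by (simp add: algebra_simps)
    ultimately have "t * lower t \<le> t * g x"
      unfolding lower_def power2_norm_add_scaleR
      by (simp add: algebra_simps inner_commute power2_eq_square)
    then show ?thesis
      using \<open>0 < t\<close> by simp
  qed
  then have "eventually (\<lambda>t. lower t \<le> g x) (at_right 0)"
    unfolding eventually_at_right_field by (intro exI[of _ 1]) auto
  moreover have "(lower \<longlongrightarrow> lower 0) (at_right 0)"
    unfolding lower_def by (intro tendsto_intros)
  ultimately have "lower 0 \<le> g x"
    by (intro tendsto_le[OF trivial_limit_at_right_real tendsto_const])
  then show ?thesis
    by (simp add: lower_def d_def)
qed

lemma fenchel_young:
  "ereal (inner p x - h x) \<le> fenchel_conj h p"
  unfolding fenchel_conj_def by (rule SUP_upper) simp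

lemma fenchel_conj_eq_if_subgradient:
  assumes "\<And>y. h x + inner p (y - x) \<le> h y"
  shows "fenchel_conj h p = ereal (inner p x - h x)"
proof (rule antisym)
  show "fenchel_conj h p \<le> ereal (inner p x - h x)"
  proof (unfold fenchel_conj_def, rule SUP_least)
    fix y
    show "ereal (inner p y - h y) \<le> ereal (inner p x - h x)"
      using assms[of y] by (simp add: inner_diff_right)
  qed
qed (rule fenchel_young)

lemma inner_add_power2_norm_complete_square:
  fixes \<xi> x a :: "'a::real_inner" and \<nu> :: real
  assumes "\<nu> \<noteq> 0"
  shows "inner \<xi> x + 1 / (2 * \<nu>) * (norm (\<xi> - a))\<^sup>2
    = 1 / (2 * \<nu>) * (norm (\<xi> - (a - \<nu> *\<^sub>R x)))\<^sup>2 + inner a x - \<nu> / 2 * (norm x)\<^sup>2"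
  using assms unfolding power2_norm_eq_inner
  by (simp add: inner_simps inner_commute field_simps power2_eq_square)

text \<open>Fenchel--Young bounds the dual energy below by a quadratic minimised at \<open>a - \<nu>x\<close>, and
  the subgradient hypothesis makes the bound attained there.\<close>

lemma fenchel_conj_add_power2_norm_minimal:
  fixes h :: "'a::real_inner \<Rightarrow> real"
  assumes "0 < \<nu>" and subgradient: "\<And>y. h x + inner (a - \<nu> *\<^sub>R x) (y - x) \<le> h y"
  defines "Ed \<equiv> \<lambda>\<xi>. fenchel_conj h \<xi> + ereal (1 / (2 * \<nu>) * (norm (\<xi> - a))\<^sup>2)"
  shows "Ed (a - \<nu> *\<^sub>R x) \<le> Ed \<xi>"
    and "Ed (a - \<nu> *\<^sub>R x) = ereal (inner a x - \<nu> / 2 * (norm x)\<^sup>2 - h x)"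
proof -
  define lower where "lower \<xi> = inner \<xi> x - h x + 1 / (2 * \<nu>) * (norm (\<xi> - a))\<^sup>2" for \<xi>
  have lower_eq: "lower \<xi> = 1 / (2 * \<nu>) * (norm (\<xi> - (a - \<nu> *\<^sub>R x)))\<^sup>2
      + (inner a x - \<nu> / 2 * (norm x)\<^sup>2 - h x)" for \<xi>
    using inner_add_power2_norm_complete_square[of \<nu> \<xi> x a] \<open>0 < \<nu>\<close> by (simp add: lower_def)
  have "Ed (a - \<nu> *\<^sub>R x) = ereal (lower (a - \<nu> *\<^sub>R x))"
    using fenchel_conj_eq_if_subgradient[OF subgradient] by (simp add: Ed_def lower_def)
  also have "\<dots> \<le> ereal (lower \<xi>)"
    using lower_eq \<open>0 < \<nu>\<close> by simp
  also have "\<dots> = ereal (inner \<xi> x - h x) + ereal (1 / (2 * \<nu>) * (norm (\<xi> - a))\<^sup>2)"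
    by (simp add: lower_def)
  also have "\<dots> \<le> Ed \<xi>"
    unfolding Ed_def by (intro add_right_mono fenchel_young)
  finally show "Ed (a - \<nu> *\<^sub>R x) \<le> Ed \<xi>" .
  show "Ed (a - \<nu> *\<^sub>R x) = ereal (inner a x - \<nu> / 2 * (norm x)\<^sup>2 - h x)"
    using fenchel_conj_eq_if_subgradient[OF subgradient] lower_eq[of "a - \<nu> *\<^sub>R x"]
    by (simp add: Ed_def lower_def)
qed

theorem proposition3p1:
  fixes f :: "nat \<Rightarrow> 'a::euclidean_space \<Rightarrow> real"
    and N j :: nat and \<mu> \<nu> :: real and \<zeta>j \<theta>j :: 'a
  assumes "N \<ge> 1"
    and cont: "\<forall>i\<in>{1..N}. continuous_on UNIV (f i)"
    and cvx: "\<forall>i\<in>{1..N}. convex_on UNIV (f i)"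
    and "\<mu> > 0"
    and sc: "\<forall>i\<in>{1..N}. strongly_convex_on \<mu> UNIV (f i)"
    and "0 < \<nu>" and "\<nu> \<le> \<mu>"
    and "j \<in> {1..N}"
    and minE: "\<forall>\<theta>. f j \<theta>j - \<nu> * inner \<zeta>j \<theta>j \<le> f j \<theta> - \<nu> * inner \<zeta>j \<theta>"
  shows "(let g = (\<lambda>\<theta>. f j \<theta> - \<nu> / 2 * (norm \<theta>)\<^sup>2);
              Ed = (\<lambda>\<xi>. fenchel_conj g \<xi> + ereal (1 / (2 * \<nu>) * (norm (\<xi> - \<nu> *\<^sub>R \<zeta>j))\<^sup>2));
              \<xi>j = \<nu> *\<^sub>R (\<zeta>j - \<theta>j)
          in (\<forall>\<xi>. Ed \<xi>j \<le> Ed \<xi>) \<and>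
             ereal (f j \<theta>j - \<nu> * inner \<zeta>j \<theta>j) + Ed \<xi>j = 0)"
proof -
  define g where "g \<theta> = f j \<theta> - \<nu> / 2 * (norm \<theta>)\<^sup>2" for \<theta>
  have "strongly_convex_on \<nu> UNIV (f j)"
    using strongly_convex_on_mono sc \<open>j \<in> {1..N}\<close> \<open>\<nu> \<le> \<mu>\<close> by blast
  then have "convex_on UNIV g"
    by (simp add: g_def[abs_def] strongly_convex_on_def)
  moreover have "g \<theta>j + \<nu> / 2 * (norm (\<theta>j - \<zeta>j))\<^sup>2 \<le> g \<theta> + \<nu> / 2 * (norm (\<theta> - \<zeta>j))\<^sup>2" for \<theta>
  proof -
    have "g \<theta> + \<nu> / 2 * (norm (\<theta> - \<zeta>j))\<^sup>2 = f j \<theta> - \<nu> * inner \<zeta>j \<theta> + \<nu> / 2 * (norm \<zeta>j)\<^sup>2" for \<theta>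
      unfolding g_def power2_norm_eq_inner by (simp add: inner_simps inner_commute algebra_simps)
    then show ?thesis
      using minE by simp
  qed
  ultimately have "g \<theta>j + inner (\<nu> *\<^sub>R \<zeta>j - \<nu> *\<^sub>R \<theta>j) (\<theta> - \<theta>j) \<le> g \<theta>" for \<theta>
    using convex_on_prox_subgradient[where c = \<zeta>j] by (simp add: scaleR_diff_right)
  note dual = fenchel_conj_add_power2_norm_minimal[OF \<open>0 < \<nu>\<close> this]
  have "\<nu> *\<^sub>R (\<zeta>j - \<theta>j) = \<nu> *\<^sub>R \<zeta>j - \<nu> *\<^sub>R \<theta>j"
    by (simp add: scaleR_diff_right)
  then show ?thesis
    unfolding Let_def g_def[symmetric, abs_def] using dual by (simp add: g_def[of \<theta>j])
qed

end
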